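(* Let $G$ be a finite abstract simplicial complex with connection matrix $L$. Then $\det(L)=\phi(G)$, where $\phi(G)=\prod_{x\in G}\omega(x)\in\{-1,1\}$.
   Context: A finite abstract simplicial complex $G$ is a finite set of non-empty finite sets closed under taking non-empty subsets; its elements are called simplices. For $x\in G$ let $\dim(x)=|x|-1$ and $\omega(x)=(-1)^{\dim(x)}$. The connection matrix $L$ of $G$ is the $|G|\times|G|$ matrix indexed by the simplices of $G$ with $L(x,y)=1$ if $x\cap y\neq\emptyset$ and $L(x,y)=0$ otherwise. The number $\phi(G)=\prod_{x\in G}\omega(x)$ is called the Fermi characteristic. *)

theory Defs
  imports "Jordan_Normal_Form.Determinant"
begin

definition simplicial_complex :: "'a set set \<Rightarrow> bool" where
  "simplicial_complex G \<longleftrightarrow> finite G \<and>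
     (\<forall>x\<in>G. finite x \<and> x \<noteq> {}) \<and>
     (\<forall>x\<in>G. \<forall>y. y \<subseteq> x \<and> y \<noteq> {} \<longrightarrow> y \<in> G)"

definition sdim :: "'a set \<Rightarrow> int" where
  "sdim x = int (card x) - 1"

definition omega :: "'a set \<Rightarrow> int" where
  "omega x = (-1) ^ nat (sdim x)"

definition fermi_char :: "'a set set \<Rightarrow> int" where
  "fermi_char G = (\<Prod>x\<in>G. omega x)"

definition connection_matrix :: "'a set list \<Rightarrow> int mat" where
  "connection_matrix xs =
     mat (length xs) (length xs) (\<lambda>(i, j). if xs ! i \<inter> xs ! j \<noteq> {} then 1 else 0)"

end

theory Submission
  imports Defs
begin

text \<open>
  Order the simplices as the list xs, let Z be the inclusion (zeta) matrix,
  Z(i, k) = 1 iff xs!k \<subseteq> xs!i, and W = Z diag(omega). The (i, j) entry of W Z^T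
  is the sum of omega over the simplices contained in xs!i \<inter> xs!j. By closure under
  subsets these are all nonempty subsets of the intersection, and this alternating
  sum is 1 if the intersection is nonempty and 0 otherwise; hence L = W Z^T.
  Both W and Z vanish off the inclusion relation, and comparing cardinalities shows
  that the only permutation following inclusions is the identity, so det Z = 1
  and det W is the product of the omega(x), i.e. phi(G).
\<close>

lemma permutes_eq_id_if_nth_subset:
  assumes p: "p permutes {0..<length xs}" and "distinct xs" and "\<forall>x\<in>set xs. finite x"
    and sub: "\<And>i. i < length xs \<Longrightarrow> xs ! p i \<subseteq> xs ! i"
  shows "p = id"
proof -
  let ?I = "{0..<length xs}" and ?c = "\<lambda>i. card (xs ! i)"
  have p_in: "p i < length xs" if "i < length xs" for i
    using p that by (simp add: permutes_in_image)
  have card_le: "?c (p i) \<le> ?c i" if "i \<in> ?I" for i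
    using that sub assms(3) by (simp add: card_mono)
  have "(\<Sum>i\<in>?I. ?c (p i)) = (\<Sum>i\<in>?I. ?c i)"
    using sum.reindex_bij_betw[OF permutes_imp_bij[OF p], of ?c] by simp
  then have card_eq: "?c (p i) = ?c i" if "i \<in> ?I" for i
    by (rule sum_mono_inv[where f="\<lambda>i. ?c (p i)" and g="?c"]) (use card_le that in auto)
  have "p i = i" if "i < length xs" for i
  proof -
    have "xs ! p i = xs ! i"
      using card_subset_eq[OF _ sub card_eq] assms(3) that by simp
    then show ?thesis
      using nth_eq_iff_index_eq[OF assms(2) p_in] that by blast
  qed
  moreover have "p i = i" if "i \<ge> length xs" for i
    using p that by (simp add: permutes_def)
  ultimately show ?thesis
    by (metis eq_id_iff not_less)
qed

lemma det_eq_prod_diag_if_supported_on_subsets: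
  fixes A :: "'b :: comm_ring_1 mat"
  assumes A: "A \<in> carrier_mat (length xs) (length xs)" and "distinct xs" and "\<forall>x\<in>set xs. finite x"
    and supp: "\<And>i j. i < length xs \<Longrightarrow> j < length xs \<Longrightarrow> A $$ (i, j) \<noteq> 0 \<Longrightarrow> xs ! j \<subseteq> xs ! i"
  shows "det A = (\<Prod>i = 0..<length xs. A $$ (i, i))"
proof -
  let ?n = "length xs"
  have vanish: "(\<Prod>i = 0..<?n. A $$ (i, p i)) = 0" if p: "p permutes {0..<?n}" and "p \<noteq> id" for p
  proof (rule ccontr)
    assume nonzero: "(\<Prod>i = 0..<?n. A $$ (i, p i)) \<noteq> 0"
    have "xs ! p i \<subseteq> xs ! i" if "i < ?n" for i
    proof (rule supp)
      show "A $$ (i, p i) \<noteq> 0"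
      proof
        assume "A $$ (i, p i) = 0"
        with that have "(\<Prod>i = 0..<?n. A $$ (i, p i)) = 0"
          by (intro prod_zero) auto
        with nonzero show False
          by contradiction
      qed
    qed (use that p in \<open>simp_all add: permutes_in_image\<close>)
    then show False
      using permutes_eq_id_if_nth_subset[OF p assms(2,3)] \<open>p \<noteq> id\<close> by blast
  qed
  have "det A = (\<Sum>p \<in> {p. p permutes {0..<?n}}. signof p * (\<Prod>i = 0..<?n. A $$ (i, p i)))"
    using det_def'[OF A] .
  also have "\<dots> = (\<Sum>p \<in> {id}. signof p * (\<Prod>i = 0..<?n. A $$ (i, p i)))"
    by (rule sum.mono_neutral_right) (auto simp: permutes_id vanish finite_permutations)
  finally show ?thesis
    by simp
qed

lemma sum_omega_nonempty_subsets:
  assumes "finite S"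
  shows "(\<Sum>z\<in>Pow S - {{}}. omega z) = (if S = {} then 0 else 1)"
proof -
  have omega_eq: "omega z = - ((-1) ^ card z)" if "z \<in> Pow S - {{}}" for z
  proof -
    have "finite z"
      using that assms finite_subset by blast
    then have "card z \<noteq> 0"
      using that by simp
    then show ?thesis
      by (cases "card z") (simp_all add: omega_def sdim_def)
  qed
  have "(\<Sum>z\<in>Pow S - {{}}. omega z) = (\<Sum>z\<in>Pow S - {{}}. - ((-1::int) ^ card z))"
    using omega_eq by (rule sum.cong[OF refl])
  also have "\<dots> = 1 - (\<Sum>z\<in>Pow S. (-1::int) ^ card z)"
    using assms by (simp add: sum_negf sum_diff1)
  also have "(\<Sum>z\<in>Pow S. (-1::int) ^ card z) = (\<Prod>x\<in>S. (1::int) - 1)"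
    using prod_diff_conv_sum[OF assms, of "\<lambda>_. 1::int" "\<lambda>_. 1"] by simp
  finally show ?thesis
    using assms by (simp add: card_gt_0_iff)
qed

lemma sum_omega_simplices_in_face:
  assumes G: "simplicial_complex G" and "x \<in> G" and "S \<subseteq> x"
  shows "(\<Sum>z\<in>{z\<in>G. z \<subseteq> S}. omega z) = (if S = {} then 0 else 1)"
proof -
  have "{z\<in>G. z \<subseteq> S} = Pow S - {{}}"
    using G assms(2,3) unfolding simplicial_complex_def by blast
  moreover have "finite S"
    using G assms(2,3) unfolding simplicial_complex_def by (meson finite_subset)
  ultimately show ?thesis
    by (simp add: sum_omega_nonempty_subsets)
qed

definition subset_matrix :: "'a set list \<Rightarrow> ('a set \<Rightarrow> 'b :: zero) \<Rightarrow> 'b mat" where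
  "subset_matrix xs f =
     mat (length xs) (length xs) (\<lambda>(i, k). if xs ! k \<subseteq> xs ! i then f (xs ! k) else 0)"

lemma subset_matrix_carrier: "subset_matrix xs f \<in> carrier_mat (length xs) (length xs)"
  by (simp add: subset_matrix_def)

lemma det_subset_matrix:
  assumes "distinct xs" and "\<forall>x\<in>set xs. finite x"
  shows "det (subset_matrix xs f) = (\<Prod>x\<in>set xs. f x)"
proof -
  have "det (subset_matrix xs f) = (\<Prod>i = 0..<length xs. subset_matrix xs f $$ (i, i))"
    by (rule det_eq_prod_diag_if_supported_on_subsets[OF subset_matrix_carrier assms])
      (auto simp: subset_matrix_def split: if_splits)
  also have "\<dots> = (\<Prod>i<length xs. f (xs ! i))"
    by (simp add: subset_matrix_def atLeast0LessThan)
  also have "\<dots> = (\<Prod>x\<in>set xs. f x)"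
    using prod.reindex_bij_betw[OF bij_betw_nth[OF assms(1) refl refl]] .
  finally show ?thesis .
qed

lemma connection_matrix_factorization:
  assumes G: "simplicial_complex G" and "distinct xs" and "set xs = G"
  shows "connection_matrix xs = subset_matrix xs omega * transpose_mat (subset_matrix xs (\<lambda>_. 1))"
    (is "_ = ?W * transpose_mat ?Z")
proof (rule eq_matI)
  fix i j
  assume "i < dim_row (?W * transpose_mat ?Z)" and "j < dim_col (?W * transpose_mat ?Z)"
  then have i: "i < length xs" and j: "j < length xs"
    by (simp_all add: subset_matrix_def)
  let ?S = "xs ! i \<inter> xs ! j"
  let ?g = "\<lambda>z. if z \<subseteq> ?S then omega z else 0"
  have "(?W * transpose_mat ?Z) $$ (i, j) = (\<Sum>k<length xs. ?g (xs ! k))"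
    using i j by (auto simp: subset_matrix_def scalar_prod_def atLeast0LessThan intro: sum.cong)
  also have "\<dots> = (\<Sum>z\<in>G. ?g z)"
    using sum.reindex_bij_betw[OF bij_betw_nth[OF assms(2) refl refl]] assms(3) by simp
  also have "\<dots> = (\<Sum>z\<in>{z\<in>G. z \<subseteq> ?S}. omega z)"
    using G by (simp add: sum.inter_filter simplicial_complex_def)
  also have "\<dots> = (if ?S = {} then 0 else 1)"
    by (rule sum_omega_simplices_in_face[OF G]) (use i assms(3) in auto)
  finally show "connection_matrix xs $$ (i, j) = (?W * transpose_mat ?Z) $$ (i, j)"
    using i j by (simp add: connection_matrix_def)
qed (simp_all add: connection_matrix_def subset_matrix_def)

theorem theorem1:
  fixes G :: "'a set set" and xs :: "'a set list"
  assumes "simplicial_complex G"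
    and "distinct xs" and "set xs = G"
  shows "det (connection_matrix xs) = fermi_char G"
proof -
  let ?W = "subset_matrix xs omega" and ?Z = "subset_matrix xs (\<lambda>_. 1 :: int)"
  have fin: "\<forall>x\<in>set xs. finite x"
    using assms(1,3) by (simp add: simplicial_complex_def)
  have "det (connection_matrix xs) = det ?W * det (transpose_mat ?Z)"
    unfolding connection_matrix_factorization[OF assms]
    by (rule det_mult[OF subset_matrix_carrier]) (simp add: subset_matrix_carrier)
  also have "\<dots> = det ?W * det ?Z"
    by (simp add: det_transpose[OF subset_matrix_carrier])
  also have "\<dots> = fermi_char G"
    using det_subset_matrix[OF assms(2) fin, of omega] det_subset_matrix[OF assms(2) fin, of "\<lambda>_. 1 :: int"]
      assms(3) by (simp add: fermi_char_def)
  finally show ?thesis .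
qed

end
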